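(* Let $G$ be a finite $p$-group with Frattini subgroup $\Phi(G)$, let $d\ge 1$ and let $w\in F_d$ be a word whose word map $\tilde w:G^d\to G$ is not surjective. Then $w(G)\subseteq \Phi(G)$.
   Context: $F_d$ is the free group on $d$ letters. For $w\in F_d$ and a group $G$, the word map $\tilde w:G^d\to G$ is evaluation of $w$ on $d$-tuples, and $w(G)$ denotes its image. *)

theory Defs
  imports "HOL-Algebra.Algebra"
begin

text \<open>Elements of the free group F_d are represented by (not necessarily reduced)
  words: lists of letters (i, b) with i < d, where (i, True) stands for the
  generator x_i and (i, False) for its inverse. Every element of F_d is
  represented, and evaluation respects free reduction, so word maps and their
  images are exactly those of the free group elements.\<close>

definition free_words :: "nat \<Rightarrow> (nat \<times> bool) list set" where
  "free_words d = {w. \<forall>x\<in>set w. fst x < d}"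

fun word_eval :: "('a, 'b) monoid_scheme \<Rightarrow> (nat \<times> bool) list \<Rightarrow> (nat \<Rightarrow> 'a) \<Rightarrow> 'a" where
  "word_eval G [] g = \<one>\<^bsub>G\<^esub>"
| "word_eval G ((i, b) # w) g =
     (if b then g i else inv\<^bsub>G\<^esub> (g i)) \<otimes>\<^bsub>G\<^esub> word_eval G w g"

text \<open>Tuples in G^d are functions g with g i in carrier G for i < d
  (values at i >= d are irrelevant for words in free_words d).\<close>

definition word_image :: "('a, 'b) monoid_scheme \<Rightarrow> nat \<Rightarrow> (nat \<times> bool) list \<Rightarrow> 'a set" where
  "word_image G d w = {word_eval G w g | g. \<forall>i<d. g i \<in> carrier G}"

definition maximal_subgroup :: "'a set \<Rightarrow> ('a, 'b) monoid_scheme \<Rightarrow> bool" where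
  "maximal_subgroup H G \<longleftrightarrow> subgroup H G \<and> H \<noteq> carrier G \<and>
     (\<forall>K. subgroup K G \<and> H \<subseteq> K \<longrightarrow> K = H \<or> K = carrier G)"

definition frattini :: "('a, 'b) monoid_scheme \<Rightarrow> 'a set" where
  "frattini G = carrier G \<inter> \<Inter> {H. maximal_subgroup H G}"

end

theory Submission
  imports Defs
begin

text \<open>If the exponent sum e of some variable in w is prime to p, then x \<mapsto> x^e is a bijection
  of the p-group G, and evaluating w at (1, ..., x, ..., 1) already hits every element.
  Otherwise every exponent sum is divisible by p. A maximal subgroup M of a p-group is
  normal (normalizers grow, by counting cosets fixed under M modulo p), and if b \<notin> M
  with b^p \<in> M then every coset of M is a power of M b. Hence modulo M the value w(g)
  equals b to an integer combination of the exponent sums, a multiple of p, so w(g) \<in> M.\<close>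

fun exponent_sum :: "(nat \<times> bool) list \<Rightarrow> nat \<Rightarrow> int" where
  "exponent_sum [] i = 0"
| "exponent_sum ((j, b) # w) i = (if j = i then (if b then 1 else -1) else 0) + exponent_sum w i"

lemma (in group) word_eval_closed:
  "w \<in> free_words d \<Longrightarrow> \<forall>i<d. g i \<in> carrier G \<Longrightarrow> word_eval G w g \<in> carrier G"
  by (induction w) (auto simp: free_words_def)

lemma (in group) word_eval_int_pow:
  assumes "w \<in> free_words d" and b: "b \<in> carrier G"
  shows "word_eval G w (\<lambda>i. b [^] k i) = b [^] (\<Sum>i<d. k i * exponent_sum w i)"
  using assms(1)
proof (induction w)
  case Nil
  then show ?case by simp
next
  case (Cons a w)
  obtain j c where a: "a = (j, c)" by fastforce
  have "j < d" and w: "w \<in> free_words d" using Cons.prems a by (auto simp: free_words_def)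
  then have "(\<Sum>i<d. k i * exponent_sum (a # w) i)
      = (if c then k j else - k j) + (\<Sum>i<d. k i * exponent_sum w i)"
    by (simp add: a distrib_left sum.distrib if_distrib cong: if_cong)
  then show ?case
    using Cons.IH[OF w] b by (simp add: a int_pow_mult int_pow_neg)
qed

lemma (in group) int_pow_surj_if_coprime:
  assumes cop: "coprime e (int (order G))" and y: "y \<in> carrier G"
  shows "\<exists>x\<in>carrier G. x [^] e = y"
proof -
  obtain u v where uv: "u * e + v * int (order G) = 1"
    using cop bezout_int by (metis coprime_iff_gcd_eq_1)
  have ord: "y [^] int (order G) = \<one>"
    using pow_order_eq_1[OF y] by (simp add: int_pow_int)
  have "u * e = 1 - int (order G) * v"
    using uv by (simp add: algebra_simps)
  then have "(y [^] u) [^] e = y [^] (1 - int (order G) * v)"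
    using y by (simp add: int_pow_pow)
  also have "\<dots> = y \<otimes> inv ((y [^] int (order G)) [^] v)"
    using y by (simp add: int_pow_diff int_pow_pow)
  also have "\<dots> = y"
    using y by (simp add: ord)
  finally show ?thesis
    using y by blast
qed

lemma (in group) word_image_eq_carrier_if_coprime:
  assumes w: "w \<in> free_words d" and "i < d"
    and cop: "coprime (exponent_sum w i) (int (order G))"
  shows "word_image G d w = carrier G"
proof
  show "word_image G d w \<subseteq> carrier G"
    unfolding word_image_def using word_eval_closed[OF w] by auto
  show "carrier G \<subseteq> word_image G d w"
  proof
    fix y assume "y \<in> carrier G"
    then obtain x where x: "x \<in> carrier G" "x [^] exponent_sum w i = y"
      using int_pow_surj_if_coprime[OF cop] by blast
    have "word_eval G w (\<lambda>j. x [^] (of_bool (j = i) :: int)) = y"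
      unfolding word_eval_int_pow[OF w x(1)] using x(2) \<open>i < d\<close> by simp
    moreover have "(\<lambda>j. x [^] (of_bool (j = i) :: int)) = (\<lambda>j. if j = i then x else \<one>)"
      using x(1) by auto
    ultimately have "word_eval G w (\<lambda>j. if j = i then x else \<one>) = y"
      by simp
    moreover have "(\<lambda>j. if j = i then x else \<one>) j \<in> carrier G" for j
      using x(1) by simp
    ultimately show "y \<in> word_image G d w"
      unfolding word_image_def by blast
  qed
qed

text \<open>Right translation by the inverse, so that the action is a homomorphism into the
  group of bijections.\<close>

lemma (in group) rcosets_action:
  assumes H: "H \<subseteq> carrier G"
  shows "group_action G (rcosets H) (\<lambda>g. \<lambda>S \<in> rcosets H. S #> inv g)"
proof -
  let ?\<phi> = "\<lambda>g. \<lambda>S \<in> rcosets H. S #> inv g"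
  have closed: "S #> a \<in> rcosets H" if "S \<in> rcosets H" "a \<in> carrier G" for S a
    using that H by (auto simp: RCOSETS_def coset_mult_assoc)
  have assoc: "S #> a #> b = S #> (a \<otimes> b)"
    if "S \<in> rcosets H" "a \<in> carrier G" "b \<in> carrier G" for S a b
    using that H by (auto simp: RCOSETS_def coset_mult_assoc m_assoc)
  have cancel: "S #> a #> inv a = S" "S #> inv a #> a = S"
    if "S \<in> rcosets H" "a \<in> carrier G" for S a
  proof -
    have "S \<subseteq> carrier G"
      using that H r_coset_subset_G unfolding RCOSETS_def by blast
    then show "S #> a #> inv a = S" "S #> inv a #> a = S"
      using that by (simp_all add: assoc)
  qed
  have bij: "?\<phi> g \<in> Bij (rcosets H)" if g: "g \<in> carrier G" for g
  proof -
    have "bij_betw (\<lambda>S. S #> inv g) (rcosets H) (rcosets H)"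
      by (rule bij_betwI[where g = "\<lambda>S. S #> g"]) (simp_all add: g closed cancel)
    then show ?thesis
      unfolding Bij_def by simp
  qed
  have "?\<phi> \<in> hom G (BijGroup (rcosets H))"
  proof (rule homI)
    show "?\<phi> x \<in> carrier (BijGroup (rcosets H))" if "x \<in> carrier G" for x
      using bij that by (simp add: BijGroup_def)
    fix x y assume x: "x \<in> carrier G" and y: "y \<in> carrier G"
    have "?\<phi> (x \<otimes> y) = compose (rcosets H) (?\<phi> x) (?\<phi> y)"
    proof
      fix S
      show "?\<phi> (x \<otimes> y) S = compose (rcosets H) (?\<phi> x) (?\<phi> y) S"
        using x y by (simp add: compose_def closed assoc inv_mult_group)
    qed
    then show "?\<phi> (x \<otimes> y) = ?\<phi> x \<otimes>\<^bsub>BijGroup (rcosets H)\<^esub> ?\<phi> y"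
      using bij x y by (simp add: BijGroup_def)
  qed
  then show ?thesis
    unfolding group_action_def group_hom_def group_hom_axioms_def
    using group_BijGroup is_group by blast
qed

lemma (in group_action) orbit_eq_singleton_iff:
  "x \<in> E \<Longrightarrow> orbit G \<phi> x = {x} \<longleftrightarrow> (\<forall>g\<in>carrier G. \<phi> g x = x)"
  using orbit_refl by (auto simp: orbit_def)

lemma (in group_action) pgroup_card_orbit:
  assumes p: "Factorial_Ring.prime p" and ord: "order G = p ^ n" and x: "x \<in> E"
  shows "\<exists>i. card (orbit G \<phi> x) = p ^ i"
  using orbit_stabilizer_theorem[OF x] ord prime_power_mult_nat[OF p] by metis

lemma (in group_action) card_fixed_points_mod:
  assumes E: "finite E" and p: "Factorial_Ring.prime p" and ord: "order G = p ^ n"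
  shows "card {x \<in> E. \<forall>g\<in>carrier G. \<phi> g x = x} mod p = card E mod p"
proof -
  let ?F = "{x \<in> E. \<forall>g\<in>carrier G. \<phi> g x = x}"
  let ?O = "orbits G E \<phi>"
  let ?O1 = "{orb \<in> ?O. card orb = 1}"
  have "?O1 = (\<lambda>x. {x}) ` ?F"
  proof
    show "?O1 \<subseteq> (\<lambda>x. {x}) ` ?F"
    proof
      fix orb assume "orb \<in> ?O1"
      then obtain x where x: "x \<in> E" "orb = orbit G \<phi> x" "card orb = 1"
        by (auto simp: orbits_def)
      then have "orb = {x}"
        using orbit_refl[OF x(1)] by (metis card_1_singletonE singletonD)
      then show "orb \<in> (\<lambda>x. {x}) ` ?F"
        using x orbit_eq_singleton_iff by blast
    qed
    show "(\<lambda>x. {x}) ` ?F \<subseteq> ?O1"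
      using orbit_eq_singleton_iff by (force simp: orbits_def)
  qed
  then have card_O1: "card ?O1 = card ?F"
    by (simp add: card_image)
  have "card E = (\<Sum>orb\<in>?O. \<Sum>x\<in>orb. 1)"
    using disjoint_sum[OF E, of "\<lambda>_. 1"] by (simp only: card_eq_sum eq_commute)
  also have "\<dots> = (\<Sum>orb\<in>?O. card orb)"
    by (rule sum.cong) simp_all
  finally have "card E mod p = (\<Sum>orb\<in>?O. card orb mod p) mod p"
    by (simp add: mod_sum_eq)
  also have "(\<Sum>orb\<in>?O. card orb mod p) = (\<Sum>orb\<in>?O. (if card orb = 1 then 1 else 0) mod p)"
  proof (rule sum.cong)
    fix orb assume "orb \<in> ?O"
    then obtain i where "card orb = p ^ i"
      using pgroup_card_orbit[OF p ord] by (auto simp: orbits_def)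
    then show "card orb mod p = (if card orb = 1 then 1 else 0) mod p"
      by (cases i) auto
  qed simp
  also have "(\<Sum>orb\<in>?O. (if card orb = 1 then 1 else 0) mod p) mod p = card ?O1 mod p"
  proof -
    have "finite ?O"
      using E orbits_coverture finite_UnionD by metis
    then show ?thesis
      by (simp add: mod_sum_eq sum.inter_filter[symmetric])
  qed
  finally show ?thesis
    using card_O1 by simp
qed

lemma (in group) mem_normalizer_iff:
  assumes "H \<subseteq> carrier G"
  shows "g \<in> normalizer G H \<longleftrightarrow> g \<in> carrier G \<and> (\<lambda>h. g \<otimes> h \<otimes> inv g) ` H = H"
proof -
  have "g <#\<^bsub>G\<^esub> H #> inv g = (\<lambda>h. g \<otimes> h \<otimes> inv g) ` H"
    by (auto simp: l_coset_def r_coset_def)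
  then show ?thesis
    using assms by (simp add: normalizer_def stabilizer_def)
qed

lemma (in group) mem_normalizer_if_conj_closed:
  assumes H: "finite H" "H \<subseteq> carrier G" and g: "g \<in> carrier G"
    and closed: "\<forall>h\<in>H. g \<otimes> h \<otimes> inv g \<in> H"
  shows "g \<in> normalizer G H"
proof -
  have "(\<lambda>h. g \<otimes> h \<otimes> inv g) ` H = H"
  proof (rule endo_inj_surj[OF H(1)])
    show "(\<lambda>h. g \<otimes> h \<otimes> inv g) ` H \<subseteq> H"
      using closed by blast
    show "inj_on (\<lambda>h. g \<otimes> h \<otimes> inv g) H"
      using g H(2) by (auto intro: inj_onI conjugation_is_inj)
  qed
  then show ?thesis
    using g mem_normalizer_iff[OF H(2)] by blast
qed

lemma (in group) pgroup_finite_carrier: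
  assumes "Factorial_Ring.prime p" and "order G = p ^ n"
  shows "finite (carrier G)"
  using assms order_gt_0_iff_finite prime_gt_0_nat by simp

lemma (in group) pgroup_prime_dvd_card_rcosets:
  assumes p: "Factorial_Ring.prime p" and ord: "order G = p ^ n"
    and M: "subgroup M G" and ne: "M \<noteq> carrier G"
  shows "p dvd card (rcosets M)"
proof -
  obtain c a where c: "card (rcosets M) = p ^ c" and "card M = p ^ a"
    using prime_power_mult_nat[OF p] lagrange[OF M] ord by metis
  have "c \<noteq> 0"
  proof
    assume "c = 0"
    then have "card M = card (carrier G)"
      using lagrange[OF M] c by (simp add: order_def)
    then show False
      using subgroup.subset[OF M] pgroup_finite_carrier[OF p ord] ne card_subset_eq by blast
  qed
  then show ?thesis
    using c by simp
qed

lemma (in group) conj_mem_if_rcos_fixed: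
  assumes M: "subgroup M G" and g: "g \<in> carrier G" and fixed: "\<forall>m\<in>M. M #> g #> inv m = M #> g"
    and m: "m \<in> M"
  shows "g \<otimes> m \<otimes> inv g \<in> M"
proof -
  have mG: "m \<in> carrier G"
    using subgroup.mem_carrier[OF M m] .
  have "M #> g #> inv (inv m) = M #> g"
    using fixed subgroup.m_inv_closed[OF M m] by blast
  then have "M #> (g \<otimes> m) = M #> g"
    using g mG subgroup.subset[OF M] by (simp add: coset_mult_assoc)
  then have "g \<otimes> m \<in> M #> g"
    using rcos_self[OF m_closed[OF g mG] M] by simp
  then show ?thesis
    using subgroup.rcos_module_imp[OF M is_group g] by simp
qed

text \<open>The number of cosets fixed by M is \<equiv> [G : M] \<equiv> 0 (mod p), and M itself is fixed,
  so some coset M g \<noteq> M is fixed as well.\<close>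

lemma (in group) pgroup_normalizer_grows:
  assumes p: "Factorial_Ring.prime p" and ord: "order G = p ^ n"
    and M: "subgroup M G" and ne: "M \<noteq> carrier G"
  shows "\<exists>g\<in>normalizer G M. g \<notin> M"
proof -
  let ?E = "rcosets M"
  let ?\<phi> = "\<lambda>g. \<lambda>S \<in> ?E. S #> inv g"
  define F where "F = {S \<in> ?E. \<forall>m\<in>M. S #> inv m = S}"
  have MG: "M \<subseteq> carrier G"
    using M subgroup.subset by blast
  have finE: "finite ?E" and finM: "finite M"
    using pgroup_finite_carrier[OF p ord] MG by (auto simp: RCOSETS_def r_coset_subset_G intro: finite_subset)
  interpret A: group_action "G\<lparr>carrier := M\<rparr>" ?E ?\<phi>
    using group_action.induced_action[OF rcosets_action[OF MG] M] .
  obtain a where "card M = p ^ a"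
    using prime_power_mult_nat[OF p] lagrange[OF M] ord by metis
  moreover have "{S \<in> ?E. \<forall>m\<in>carrier (G\<lparr>carrier := M\<rparr>). ?\<phi> m S = S} = F"
    by (auto simp: F_def)
  ultimately have "card F mod p = card ?E mod p"
    using A.card_fixed_points_mod[OF finE p] by (simp add: order_def)
  then have dvd: "p dvd card F"
    using pgroup_prime_dvd_card_rcosets[OF p ord M ne] by (simp add: mod_eq_0_iff_dvd)
  have MF: "M \<in> F"
    using rcosetsI[OF MG one_closed] MG M unfolding F_def
    by (simp add: coset_join2 subgroup.m_inv_closed subsetD)
  have "card F > 0"
    using MF finE unfolding F_def by (auto simp: card_gt_0_iff)
  then have "card F \<ge> p"
    using dvd by (simp add: dvd_imp_le)
  then have "F \<noteq> {M}"
    using prime_ge_2_nat[OF p] by auto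
  then obtain g where g: "g \<in> carrier G" and fixed: "M #> g \<in> F" and "M #> g \<noteq> M"
    using MF unfolding F_def RCOSETS_def by blast
  then have "g \<notin> M"
    using M coset_join2 by blast
  moreover have "\<forall>m\<in>M. g \<otimes> m \<otimes> inv g \<in> M"
    using conj_mem_if_rcos_fixed[OF M g] fixed unfolding F_def by blast
  ultimately show ?thesis
    using mem_normalizer_if_conj_closed[OF finM MG g] by blast
qed

lemma (in group) pgroup_maximal_subgroup_normal:
  assumes p: "Factorial_Ring.prime p" and ord: "order G = p ^ n" and max: "maximal_subgroup M G"
  shows "M \<lhd> G"
proof -
  have M: "subgroup M G" and ne: "M \<noteq> carrier G"
    using max by (auto simp: maximal_subgroup_def)
  have MG: "M \<subseteq> carrier G"
    using M subgroup.subset by blast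
  obtain g where "g \<in> normalizer G M" "g \<notin> M"
    using pgroup_normalizer_grows[OF p ord M ne] by blast
  moreover have "subgroup (normalizer G M) G"
    using normalizer_imp_subgroup[OF MG] .
  moreover have "M \<subseteq> normalizer G M"
    using subgroup.subset[OF normal_imp_subgroup[OF subgroup_in_normalizer[OF M]]] by simp
  ultimately have "normalizer G M = carrier G"
    using max unfolding maximal_subgroup_def by blast
  then have "\<forall>x\<in>carrier G. \<forall>h\<in>M. x \<otimes> h \<otimes> inv x \<in> M"
    using mem_normalizer_iff[OF MG] by blast
  then show ?thesis
    using M normal_inv_iff by blast
qed

lemma (in group) pgroup_exists_pow_prime_mem:
  assumes p: "Factorial_Ring.prime p" and ord: "order G = p ^ n"
    and M: "subgroup M G" and ne: "M \<noteq> carrier G"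
  shows "\<exists>b\<in>carrier G. b \<notin> M \<and> b [^] p \<in> M"
proof -
  obtain a where a: "a \<in> carrier G" "a \<notin> M"
    using ne M subgroup.subset by blast
  have "a [^] (p ^ n) \<in> M"
    using pow_order_eq_1[OF a(1)] ord subgroup.one_closed[OF M] by simp
  define i where "i = (LEAST i. a [^] (p ^ i) \<in> M)"
  have i: "a [^] (p ^ i) \<in> M"
    unfolding i_def by (rule LeastI) fact
  have "i \<noteq> 0"
  proof
    assume "i = 0"
    then show False
      using i a by simp
  qed
  then obtain j where j: "i = Suc j"
    using not0_implies_Suc by blast
  have "a [^] (p ^ j) \<notin> M"
    using not_less_Least[of j "\<lambda>i. a [^] (p ^ i) \<in> M"] j unfolding i_def by simp
  moreover have "(a [^] (p ^ j)) [^] p \<in> M"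
    using i j a by (simp add: nat_pow_pow mult.commute)
  ultimately show ?thesis
    using a by blast
qed

lemma (in normal) maximal_rcos_eq_int_pow:
  assumes max: "maximal_subgroup H G" and b: "b \<in> carrier G" "b \<notin> H"
    and x: "x \<in> carrier G"
  shows "\<exists>k::int. H #> x = H #> b [^] k"
proof -
  define K where "K = {x \<in> carrier G. \<exists>k::int. H #> x = H #> b [^] k}"
  have "subgroup K G"
  proof (rule subgroupI)
    show "K \<subseteq> carrier G"
      unfolding K_def by blast
    show "K \<noteq> {}"
      using b(1) unfolding K_def by (auto intro!: exI[of _ 0])
  next
    fix y assume "y \<in> K"
    then obtain k :: int where y: "y \<in> carrier G" "H #> y = H #> b [^] k"
      unfolding K_def by blast
    have "H #> inv y = set_inv (H #> y)"
      by (rule rcos_inv[OF y(1), symmetric])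
    also have "\<dots> = set_inv (H #> b [^] k)"
      using y by simp
    also have "\<dots> = H #> b [^] (- k)"
      using b(1) by (simp add: rcos_inv int_pow_neg)
    finally show "inv y \<in> K"
      using y(1) unfolding K_def by blast
  next
    fix y z assume "y \<in> K" "z \<in> K"
    then obtain k l :: int where y: "y \<in> carrier G" "H #> y = H #> b [^] k"
      and z: "z \<in> carrier G" "H #> z = H #> b [^] l"
      unfolding K_def by blast
    have "H #> (y \<otimes> z) = (H #> b [^] k) <#> (H #> b [^] l)"
      using y z by (simp add: rcos_sum[symmetric])
    also have "\<dots> = H #> b [^] (k + l)"
      using b(1) by (simp add: rcos_sum int_pow_mult)
    finally show "y \<otimes> z \<in> K"
      using y(1) z(1) unfolding K_def by blast
  qed
  moreover have "H \<subseteq> K"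
    unfolding K_def using subset by (auto simp: rcos_const intro!: exI[of _ 0])
  moreover have "b \<in> K"
    unfolding K_def using b(1) by (auto intro!: exI[of _ 1])
  ultimately have "K = carrier G"
    using max b(2) unfolding maximal_subgroup_def by blast
  then show ?thesis
    using x unfolding K_def by blast
qed

lemma (in normal) rcos_word_eval_cong:
  assumes w: "w \<in> free_words d"
    and g: "\<forall>i<d. g i \<in> carrier G" and g': "\<forall>i<d. g' i \<in> carrier G"
    and eq: "\<forall>i<d. H #> g i = H #> g' i"
  shows "H #> word_eval G w g = H #> word_eval G w g'"
  using w
proof (induction w)
  case Nil
  then show ?case by simp
next
  case (Cons a w)
  obtain i c where a: "a = (i, c)" by fastforce
  have i: "i < d" and w: "w \<in> free_words d"
    using Cons.prems a by (auto simp: free_words_def)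
  have letter: "H #> (if c then g i else inv (g i)) = H #> (if c then g' i else inv (g' i))"
    using g g' eq i by (simp add: rcos_inv[symmetric])
  show ?case
    using Cons.IH[OF w] letter g g' i word_eval_closed[OF w]
    by (simp add: a rcos_sum[symmetric])
qed

lemma (in group) pgroup_word_eval_mem_maximal:
  assumes p: "Factorial_Ring.prime p" and ord: "order G = p ^ n" and max: "maximal_subgroup M G"
    and w: "w \<in> free_words d" and dvd: "\<forall>i<d. int p dvd exponent_sum w i"
    and g: "\<forall>i<d. g i \<in> carrier G"
  shows "word_eval G w g \<in> M"
proof -
  have M: "subgroup M G" and ne: "M \<noteq> carrier G"
    using max by (auto simp: maximal_subgroup_def)
  interpret normal M G
    using pgroup_maximal_subgroup_normal[OF p ord max] .
  obtain b where b: "b \<in> carrier G" "b \<notin> M" "b [^] p \<in> M"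
    using pgroup_exists_pow_prime_mem[OF p ord M ne] by blast
  have ex: "\<forall>i. \<exists>k::int. i < d \<longrightarrow> M #> g i = M #> b [^] k"
    using maximal_rcos_eq_int_pow[OF max b(1,2)] g by blast
  obtain k :: "nat \<Rightarrow> int" where k: "\<forall>i<d. M #> g i = M #> b [^] k i"
    using choice[OF ex] by blast
  have "int p dvd (\<Sum>i<d. k i * exponent_sum w i)"
    using dvd by (intro dvd_sum) simp
  then obtain t where t: "(\<Sum>i<d. k i * exponent_sum w i) = int p * t"
    by (rule dvdE)
  have "M #> word_eval G w g = M #> word_eval G w (\<lambda>i. b [^] k i)"
    using rcos_word_eval_cong[OF w g _ k] b(1) by simp
  also have "word_eval G w (\<lambda>i. b [^] k i) = (b [^] p) [^] t"
    using b(1) int_pow_pow[OF b(1), of "int p" t] int_pow_int[of G b p] by (simp add: word_eval_int_pow[OF w] t)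
  also have "M #> (b [^] p) [^] t = M"
    using b(3) M by (simp add: coset_join2 subgroup_int_pow_closed)
  finally show ?thesis
    using coset_join1 M word_eval_closed[OF w g] by blast
qed

lemma (in group) pgroup_prime_dvd_exponent_sum:
  assumes p: "Factorial_Ring.prime p" and ord: "order G = p ^ n"
    and w: "w \<in> free_words d" and i: "i < d" and not_surj: "word_image G d w \<noteq> carrier G"
  shows "int p dvd exponent_sum w i"
proof (rule ccontr)
  assume "\<not> int p dvd exponent_sum w i"
  then have "coprime (int p) (exponent_sum w i)"
    using p by (simp add: prime_imp_coprime)
  then have "coprime (exponent_sum w i) (int (order G))"
    using ord by (simp add: coprime_commute)
  then show False
    using word_image_eq_carrier_if_coprime[OF w i] not_surj by blast
qed

theorem lemma3p1:
  fixes G :: "('a, 'b) monoid_scheme" and p d :: nat and w :: "(nat \<times> bool) list"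
  assumes "group G" and "finite (carrier G)"
    and "Factorial_Ring.prime p" and "\<exists>n. order G = p ^ n"
    and "d \<ge> 1" and "w \<in> free_words d"
    and "word_image G d w \<noteq> carrier G"
  shows "word_image G d w \<subseteq> frattini G"
proof
  interpret group G by fact
  obtain n where ord: "order G = p ^ n"
    using assms(4) by blast
  fix y assume "y \<in> word_image G d w"
  then obtain g where g: "\<forall>i<d. g i \<in> carrier G" and y: "y = word_eval G w g"
    unfolding word_image_def by blast
  have "\<forall>i<d. int p dvd exponent_sum w i"
    using pgroup_prime_dvd_exponent_sum[OF assms(3) ord assms(6) _ assms(7)] by blast
  then show "y \<in> frattini G"
    unfolding frattini_def
    using y word_eval_closed[OF assms(6) g] pgroup_word_eval_mem_maximal[OF assms(3) ord _ assms(6) _ g]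
    by blast
qed

end
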